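(* Let $\tilde a,\tilde b,\tilde c,\tilde d>0$, $\tilde p\in(4,\infty)$, $\tilde q\in(0,2)$, and $f(t)=\tilde at^2+\tilde bt^4-\tilde ct^{\tilde p}-\tilde dt^{\tilde q}$ for $t\ge0$. Put $X=\frac{8(4-\tilde q)}{\tilde p(\tilde p-2)(\tilde p-\tilde q)}$. If $$\Big[X^{\frac{4-\tilde q}{\tilde p-4}}-X^{\frac{\tilde p-\tilde q}{\tilde p-4}}\Big]\Big[\frac{\tilde a}{\tilde d}\Big(\frac{\tilde b}{\tilde c}\Big)^{\frac{2-\tilde q}{\tilde p-4}}+\frac1{\tilde d}\frac{\tilde b^{\frac{\tilde p-\tilde q}{\tilde p-4}}}{\tilde c^{\frac{4-\tilde q}{\tilde p-4}}}\Big]>1,$$ then $f$ has on $[0,\infty)$ a local strict minimum at a negative level and a global strict maximum at a positive level. *)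

theory Defs
  imports Complex_Main
begin

definition strict_local_min_on :: "(real \<Rightarrow> real) \<Rightarrow> real set \<Rightarrow> real \<Rightarrow> bool" where
  "strict_local_min_on g S x0 \<longleftrightarrow> x0 \<in> S \<and>
     (\<exists>e>0. \<forall>x\<in>S. x \<noteq> x0 \<and> \<bar>x - x0\<bar> < e \<longrightarrow> g x0 < g x)"

definition strict_global_max_on :: "(real \<Rightarrow> real) \<Rightarrow> real set \<Rightarrow> real \<Rightarrow> bool" where
  "strict_global_max_on g S x0 \<longleftrightarrow> x0 \<in> S \<and> (\<forall>x\<in>S. x \<noteq> x0 \<longrightarrow> g x < g x0)"

end

theory Submission
  imports Defs
begin

text \<open>Write f'(t) = t^(q-1) H(t) and H'(t) = t^(1-q) K(t) for t > 0. The factor K stays negative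
  once it is nonpositive, so H first increases and then decreases and has at most two positive
  zeros. The function f is negative near 0 (where the term -d t^q dominates) and for large t
  (where -c t^p dominates), and the hypothesis makes it positive at t = (X b/c)^(1/(p-4)). Hence
  the maximum of f is positive and attained at a critical point t2, the minimum on [0,t2] is
  negative and attained at a critical point t1, and since H has no further zeros both extrema are
  strict.\<close>

lemma strict_local_min_on_cong:
  "(\<And>x. x \<in> S \<Longrightarrow> f x = g x) \<Longrightarrow> strict_local_min_on f S t = strict_local_min_on g S t"
  by (simp add: strict_local_min_on_def cong: conj_cong)

lemma strict_global_max_on_cong:
  "(\<And>x. x \<in> S \<Longrightarrow> f x = g x) \<Longrightarrow> strict_global_max_on f S t = strict_global_max_on g S t"
  by (simp add: strict_global_max_on_def cong: conj_cong)

lemma DERIV_zero_at_interior_max: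
  fixes F :: "real \<Rightarrow> real"
  assumes "(F has_real_derivative D) (at t)" "l < t" "t < r" "\<And>y. y \<in> {l..r} \<Longrightarrow> F y \<le> F t"
  shows "D = 0"
proof (rule DERIV_local_max[OF assms(1)])
  show "0 < min (t - l) (r - t)" using assms by simp
  show "\<forall>y. \<bar>t - y\<bar> < min (t - l) (r - t) \<longrightarrow> F y \<le> F t"
    using assms(4) by (auto simp: abs_if split: if_splits)
qed

lemma DERIV_zero_at_interior_min:
  fixes F :: "real \<Rightarrow> real"
  assumes "(F has_real_derivative D) (at t)" "l < t" "t < r" "\<And>y. y \<in> {l..r} \<Longrightarrow> F t \<le> F y"
  shows "D = 0"
  using DERIV_zero_at_interior_max[OF DERIV_minus[OF assms(1)] assms(2,3)] assms(4) by simp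

text \<open>A function whose derivative has the sign of a factor K that stays negative once it is
  nonpositive first increases and then decreases, so it never dips below both neighbours.\<close>
lemma DERIV_sign_change_once_imp_quasiconcave:
  fixes H K w :: "real \<Rightarrow> real"
  assumes deriv: "\<And>t. 0 < t \<Longrightarrow> (H has_real_derivative w t * K t) (at t)"
    and w_pos: "\<And>t. 0 < t \<Longrightarrow> 0 < w t"
    and K_stays_neg: "\<And>x y. 0 < x \<Longrightarrow> x < y \<Longrightarrow> K x \<le> 0 \<Longrightarrow> K y < 0"
    and "0 < x" "x < y" "y < z"
  shows "min (H x) (H z) < H y"
proof (rule ccontr)
  assume "\<not> min (H x) (H z) < H y"
  then have left: "H y \<le> H x" and right: "H y \<le> H z" by auto
  obtain u where u: "x < u" "u < y" "H y - H x = (y - x) * (w u * K u)"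
    using MVT2[of x y H "\<lambda>t. w t * K t"] assms deriv by force
  obtain v where v: "y < v" "v < z" "H z - H y = (z - y) * (w v * K v)"
    using MVT2[of y z H "\<lambda>t. w t * K t"] assms deriv by force
  have "(y - x) * (w u * K u) \<le> 0" using u left by linarith
  then have "w u * K u \<le> 0" using u by (simp add: mult_le_0_iff)
  then have "K u \<le> 0" using w_pos[of u] u \<open>0 < x\<close> by (simp add: mult_le_0_iff)
  then have "K v < 0" using K_stays_neg[of u v] u v \<open>0 < x\<close> by linarith
  then have "(z - y) * (w v * K v) < 0"
    using v w_pos[of v] \<open>0 < x\<close> \<open>x < y\<close> by (simp add: mult_pos_neg)
  then show False using v right by linarith
qed

locale neg_pos_neg_profile =
  fixes F w H :: "real \<Rightarrow> real"
  assumes continuous: "continuous_on {0..} F"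
    and deriv: "\<And>t. 0 < t \<Longrightarrow> (F has_real_derivative w t * H t) (at t)"
    and weight_nonzero: "\<And>t. 0 < t \<Longrightarrow> w t \<noteq> 0"
    and at_most_two_zeros: "\<And>x y z. 0 < x \<Longrightarrow> x < y \<Longrightarrow> y < z \<Longrightarrow>
                              H x = 0 \<Longrightarrow> H y = 0 \<Longrightarrow> H z = 0 \<Longrightarrow> False"
    and at_0: "F 0 = 0"
    and neg_near_0: "\<And>r. 0 < r \<Longrightarrow> \<exists>s. 0 < s \<and> s < r \<and> F s < 0"
    and pos_somewhere: "\<exists>s\<ge>0. 0 < F s"
    and neg_at_top: "\<exists>T. \<forall>t\<ge>T. F t < 0"
begin

lemma zero_of_interior_max:
  assumes "0 \<le> l" "l < t" "t < r" "\<And>y. y \<in> {l..r} \<Longrightarrow> F y \<le> F t"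
  shows "H t = 0"
  using DERIV_zero_at_interior_max[OF deriv assms(2-4)] weight_nonzero[of t] assms(1,2) by simp

lemma zero_of_interior_min:
  assumes "0 \<le> l" "l < t" "t < r" "\<And>y. y \<in> {l..r} \<Longrightarrow> F t \<le> F y"
  shows "H t = 0"
  using DERIV_zero_at_interior_min[OF deriv assms(2-4)] weight_nonzero[of t] assms(1,2) by simp

lemma zero_cases:
  assumes "0 < t1" "t1 < t2" "H t1 = 0" "H t2 = 0" "0 < x" "H x = 0"
  shows "x = t1 \<or> x = t2"
proof (rule ccontr)
  assume "\<not> (x = t1 \<or> x = t2)"
  then consider "x < t1" | "t1 < x" "x < t2" | "t2 < x" by linarith
  then show False
  proof cases
    case 1 then show ?thesis using at_most_two_zeros[of x t1 t2] assms by simp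
  next
    case 2 then show ?thesis using at_most_two_zeros[of t1 x t2] assms by simp
  next
    case 3 then show ?thesis using at_most_two_zeros[of t1 t2 x] assms by simp
  qed
qed

lemma obtain_pos_max:
  obtains t2 T where "0 < t2" "t2 < T" "0 < F t2"
    "\<And>y. y \<in> {0..T} \<Longrightarrow> F y \<le> F t2" "\<And>y. T \<le> y \<Longrightarrow> F y < 0"
proof -
  obtain s where s: "0 \<le> s" "0 < F s" using pos_somewhere by blast
  obtain T where T: "\<And>t. T \<le> t \<Longrightarrow> F t < 0" using neg_at_top by blast
  have "s < T" using s T[of s] by linarith
  obtain t2 where t2: "t2 \<in> {0..T}" "\<And>y. y \<in> {0..T} \<Longrightarrow> F y \<le> F t2"
  proof -
    have "continuous_on {0..T} F" by (rule continuous_on_subset[OF continuous]) auto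
    then show ?thesis using continuous_attains_sup[of "{0..T}" F] that \<open>s < T\<close> s(1) by auto
  qed
  have "0 < F t2" using t2(2)[of s] s \<open>s < T\<close> by auto
  moreover have "t2 \<noteq> 0" "t2 \<noteq> T" using calculation at_0 T[of T] by auto
  ultimately show ?thesis using that[of t2 T] t2 T by force
qed

lemma obtain_neg_min:
  assumes "0 < t2" "0 \<le> F t2"
  obtains t1 where "0 < t1" "t1 < t2" "F t1 < 0" "\<And>y. y \<in> {0..t2} \<Longrightarrow> F t1 \<le> F y"
proof -
  obtain s where s: "0 < s" "s < t2" "F s < 0" using neg_near_0[OF assms(1)] by blast
  have "continuous_on {0..t2} F" by (rule continuous_on_subset[OF continuous]) auto
  then obtain t1 where t1: "t1 \<in> {0..t2}" "\<And>y. y \<in> {0..t2} \<Longrightarrow> F t1 \<le> F y"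
    using continuous_attains_inf[of "{0..t2}" F] assms(1) by auto
  have "F t1 < 0" using t1(2)[of s] s by auto
  moreover have "t1 \<noteq> 0" "t1 \<noteq> t2" using calculation at_0 assms(2) by auto
  ultimately show ?thesis using that[of t1] t1 by force
qed

theorem strict_local_min_and_strict_global_max:
  "(\<exists>t1. strict_local_min_on F {0..} t1 \<and> F t1 < 0) \<and>
   (\<exists>t2. strict_global_max_on F {0..} t2 \<and> 0 < F t2)"
proof -
  obtain t2 T where t2: "0 < t2" "t2 < T" "0 < F t2"
    and max: "\<And>y. y \<in> {0..T} \<Longrightarrow> F y \<le> F t2" and tail: "\<And>y. T \<le> y \<Longrightarrow> F y < 0"
    using obtain_pos_max by blast
  obtain t1 where t1: "0 < t1" "t1 < t2" "F t1 < 0"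
    and min: "\<And>y. y \<in> {0..t2} \<Longrightarrow> F t1 \<le> F y"
    using obtain_neg_min[OF t2(1) less_imp_le[OF t2(3)]] by blast
  have zeros: "x = t1 \<or> x = t2" if "0 < x" "H x = 0" for x
    using zero_cases[OF t1(1,2) _ _ that] zero_of_interior_min[OF _ t1(1,2) min]
      zero_of_interior_max[OF _ t2(1,2) max] by simp
  have "F x < F t2" if "0 \<le> x" "x \<noteq> t2" for x
  proof (cases "x = 0 \<or> T \<le> x")
    case False
    then have "F x \<le> F t2" "0 < x" "x < T" using max that by auto
    moreover have "H x = 0" if "F x = F t2"
      using zero_of_interior_max[of 0 x T] max \<open>0 < x\<close> \<open>x < T\<close> that by simp
    ultimately show ?thesis using zeros t1(3) t2(3) \<open>x \<noteq> t2\<close> by force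
  qed (use at_0 tail[of x] t2 in auto)
  then have "strict_global_max_on F {0..} t2"
    using t2 by (simp add: strict_global_max_on_def)
  moreover have "F t1 < F x" if "0 \<le> x" "x \<noteq> t1" "x < t2" for x
  proof (cases "x = 0")
    case False
    then have "F t1 \<le> F x" "0 < x" using min that by auto
    moreover have "H x = 0" if "F x = F t1"
      using zero_of_interior_min[of 0 x t2] min \<open>0 < x\<close> \<open>x < t2\<close> that by simp
    ultimately show ?thesis using zeros \<open>x \<noteq> t1\<close> \<open>x < t2\<close> by force
  qed (use at_0 t1 in auto)
  then have "strict_local_min_on F {0..} t1"
    unfolding strict_local_min_on_def using t1 by (intro conjI exI[of _ "t2 - t1"]) auto
  ultimately show ?thesis using t1 t2 by blast
qed

end

lemma quartic_powr_factor:
  fixes a b c d p q t :: real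
  assumes "0 < t"
  shows "a*t^2 + b*t^4 - c*t powr p - d*t powr q
       = t powr q * (a*t powr (2-q) + b*t powr (4-q) - c*t powr (p-q) - d)"
proof -
  have "t powr q * t powr (2-q) = t^2" "t powr q * t powr (4-q) = t^4"
       "t powr q * t powr (p-q) = t powr p"
    using assms by (simp_all flip: powr_add)
  then show ?thesis by (simp add: algebra_simps)
qed

lemma quadratic_minus_powr_neg_beyond:
  fixes A B C p x y :: real
  assumes "0 < A" "0 < C" "4 < p" "0 < x" "x < y"
    and "A + B*x^2 - C*x powr (p-2) \<le> 0"
  shows "A + B*y^2 - C*y powr (p-2) < 0"
proof -
  define g where "g t = B - C * t powr (p-4)" for t
  have factor: "A + B*t^2 - C*t powr (p-2) = A + t^2 * g t" if "0 < t" for t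
  proof -
    have "t powr (p-2) = t^2 * t powr (p-4)" using that powr_add[of t 2 "p-4"] by simp
    then show ?thesis by (simp add: g_def algebra_simps)
  qed
  have at_x: "A + x^2 * g x \<le> 0" using assms(4,6) factor by simp
  then have "g x < 0" using assms(1) by (smt (verit) zero_le_mult_iff zero_le_power2)
  have "x powr (p-4) < y powr (p-4)" using assms by (intro powr_less_mono2) auto
  then have "g y < g x" using assms(2) by (simp add: g_def)
  then have "y^2 * g y < y^2 * g x" using assms by simp
  also have "\<dots> < x^2 * g x"
    using \<open>g x < 0\<close> assms by (intro mult_strict_right_mono_neg power_strict_mono) auto
  finally show ?thesis using at_x factor[of y] assms by simp
qed

lemma DERIV_quartic_powr:
  fixes a b c d p q t :: real
  assumes "0 < t"
  shows "((\<lambda>t. a*t^2 + b*t^4 - c*t powr p - d*t powr q) has_real_derivative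
          t powr (q-1) * (2*a*t powr (2-q) + 4*b*t powr (4-q) - c*p*t powr (p-q) - d*q)) (at t)"
proof -
  have "((\<lambda>t. a*t^2 + b*t^4 - c*t powr p - d*t powr q) has_real_derivative
          a*(2*t) + b*(4*t^3) - c*(p*t powr (p-1)) - d*(q*t powr (q-1))) (at t)"
    by (intro derivative_eq_intros has_real_derivative_powr assms) auto
  moreover have "t powr (q-1) * t powr (2-q) = t" "t powr (q-1) * t powr (4-q) = t^3"
      "t powr (q-1) * t powr (p-q) = t powr (p-1)"
    using assms powr_add[of t "q-1" "2-q"] powr_add[of t "q-1" "4-q"] powr_add[of t "q-1" "p-q"]
    by simp_all
  ultimately show ?thesis by (simp add: algebra_simps)
qed

lemma DERIV_quartic_powr_slope:
  fixes a b c d p q t :: real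
  assumes "0 < t"
  shows "((\<lambda>t. 2*a*t powr (2-q) + 4*b*t powr (4-q) - c*p*t powr (p-q) - d*q) has_real_derivative
          t powr (1-q) * (2*a*(2-q) + 4*b*(4-q)*t^2 - c*p*(p-q)*t powr (p-2))) (at t)"
proof -
  have "((\<lambda>t. 2*a*t powr (2-q) + 4*b*t powr (4-q) - c*p*t powr (p-q) - d*q) has_real_derivative
     2*a*((2-q)*t powr (2-q-1)) + 4*b*((4-q)*t powr (4-q-1)) - c*p*((p-q)*t powr (p-q-1)) - 0)
     (at t)"
    by (intro DERIV_diff DERIV_add DERIV_cmult DERIV_const has_real_derivative_powr assms)
  moreover have "t powr (2-q-1) = t powr (1-q)" "t powr (4-q-1) = t powr (1-q) * t^2"
      "t powr (p-q-1) = t powr (1-q) * t powr (p-2)"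
    using assms powr_add[of t "1-q" 2] powr_add[of t "1-q" "p-2"] by (simp_all add: algebra_simps)
  ultimately show ?thesis by (simp add: algebra_simps)
qed

lemma continuous_on_quartic_powr:
  fixes a b c d p q :: real
  assumes "0 < p" "0 < q"
  shows "continuous_on {0..} (\<lambda>t. a*t^2 + b*t^4 - c*t powr p - d*t powr q)"
  using assms by (intro continuous_intros continuous_on_powr') auto

lemma quartic_powr_neg_at_top:
  fixes a b c d p q :: real
  assumes "0 < a" "0 < b" "0 < c" "0 \<le> d" "4 < p"
  shows "\<exists>T. \<forall>t\<ge>T. a*t^2 + b*t^4 - c*t powr p - d*t powr q < 0"
proof -
  define T where "T = ((a + b) / c) powr (1 / (p - 4)) + 1"
  have "a*t^2 + b*t^4 - c*t powr p - d*t powr q < 0" if "T \<le> t" for t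
  proof -
    have "((a + b) / c) powr (1 / (p - 4)) < t" "1 \<le> t"
      using that powr_ge_zero[of "(a + b) / c" "1 / (p - 4)"] unfolding T_def by linarith+
    then have "(a + b) / c < t powr (p - 4)"
      using assms powr_less_mono2[of "p - 4" "((a + b) / c) powr (1 / (p - 4))" t]
      by (simp add: powr_powr)
    then have "a + b < c * t powr (p - 4)" using assms by (simp add: field_simps)
    then have "(a + b) * t^4 < c * (t^4 * t powr (p - 4))"
      using \<open>1 \<le> t\<close> mult_strict_right_mono[of "a + b" "c * t powr (p - 4)" "t^4"]
      by (simp add: ac_simps)
    also have "t^4 * t powr (p - 4) = t powr p" using \<open>1 \<le> t\<close> powr_add[of t 4 "p - 4"] by simp
    finally have "(a + b) * t^4 < c * t powr p" .
    moreover have "a * t^2 \<le> a * t^4"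
      using \<open>1 \<le> t\<close> assms by (intro mult_left_mono power_increasing) auto
    moreover have "0 \<le> d * t powr q" using assms by simp
    ultimately show ?thesis by (simp add: algebra_simps)
  qed
  then show ?thesis by blast
qed

lemma quartic_powr_neg_near_0:
  fixes a b c d p q r :: real
  assumes "0 < a" "0 < b" "0 \<le> c" "0 < d" "0 < q" "q < 2" "0 < r"
  shows "\<exists>s. 0 < s \<and> s < r \<and> a*s^2 + b*s^4 - c*s powr p - d*s powr q < 0"
proof -
  define s where "s = min (r/2) (min 1 ((d / (2*(a+b))) powr (1/(2-q))))"
  have s: "0 < s" "s < r" "s \<le> 1" "s powr (2-q) \<le> d / (2*(a+b))"
    using assms powr_mono2[of "2-q" s "(d / (2*(a+b))) powr (1/(2-q))"]
    by (auto simp: s_def powr_powr)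
  have "a*s^2 + b*s^4 \<le> (a+b) * s^2"
    using s assms power_decreasing[of 2 4 s] by (simp add: algebra_simps)
  also have "\<dots> = (a+b) * s powr (2-q) * s powr q" using s powr_add[of s "2-q" q] by simp
  also have "\<dots> \<le> d/2 * s powr q"
    using s assms mult_right_mono[of "(a+b) * s powr (2-q)" "d/2" "s powr q"]
    by (simp add: field_simps)
  finally have "a*s^2 + b*s^4 \<le> d/2 * s powr q" .
  moreover have "0 < d * s powr q" "0 \<le> c * s powr p" using s assms by simp_all
  ultimately show ?thesis using s by (intro exI[of _ s]) auto
qed

lemma scaling_constant_bounds:
  fixes p q :: real
  assumes "4 < p" "q < 4"
  shows "0 < 8*(4-q) / (p*(p-2)*(p-q))" "8*(4-q) / (p*(p-2)*(p-q)) < 1"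
proof -
  have "4 * 2 < p * (p-2)" using assms by (intro mult_strict_mono) auto
  then have "8*(4-q) < p*(p-2)*(p-q)" using assms by (intro mult_strict_mono) auto
  then show "8*(4-q) / (p*(p-2)*(p-q)) < 1" "0 < 8*(4-q) / (p*(p-2)*(p-q))"
    using assms by simp_all
qed

text \<open>For \<alpha> = (4-q)/(p-4) and \<gamma> = (2-q)/(p-4) the assumption is the hypothesis of the
  theorem and the conclusion says f(s) / s^q > 0 for s^(p-4) = X b/c; the only estimate used is
  X^\<alpha> \<le> X^\<gamma>.\<close>
lemma pos_at_scaled_point:
  fixes a b c d X \<alpha> \<gamma> :: real
  assumes "0 < a" "0 < b" "0 < c" "0 < d" "0 < X" "X < 1" "\<gamma> \<le> \<alpha>"
    and cond: "(X powr \<alpha> - X powr (\<alpha> + 1)) *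
               (a / d * (b / c) powr \<gamma> + 1 / d * (b powr (\<alpha> + 1) / c powr \<alpha>)) > 1"
  shows "0 < a * (X*b/c) powr \<gamma> + b * (X*b/c) powr \<alpha> - c * (X*b/c) powr (\<alpha> + 1) - d"
proof -
  define Xa Bg Ba where "Xa = X powr \<alpha>" "Bg = (b/c) powr \<gamma>" "Ba = (b/c) powr \<alpha>"
  have pos: "0 < Xa" "0 < Bg" "0 < Ba" using assms by (simp_all add: Xa_Bg_Ba_def)
  have "b powr (\<alpha> + 1) / c powr \<alpha> = b * Ba" "X powr (\<alpha> + 1) = Xa * X"
    using assms by (simp_all add: Xa_Bg_Ba_def powr_add powr_divide)
  with cond have "1 < (Xa - Xa*X) * (a/d*Bg + 1/d*(b*Ba))"
    unfolding Xa_Bg_Ba_def[symmetric] by simp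
  also have "(Xa - Xa*X) * (a/d*Bg + 1/d*(b*Ba)) = (Xa - Xa*X) * (a*Bg + b*Ba) / d"
    by (simp add: divide_inverse algebra_simps)
  finally have "d < (Xa - Xa*X) * (a*Bg + b*Ba)" using assms(4) by (simp add: less_divide_eq_1_pos)
  also have "\<dots> \<le> a * (X powr \<gamma> * Bg) + b * (Xa * Ba * (1 - X))"
  proof -
    have "Xa \<le> X powr \<gamma>" using assms powr_mono'[of \<gamma> \<alpha> X] by (simp add: Xa_Bg_Ba_def)
    moreover have "0 < Xa*X" using pos assms by simp
    ultimately have "Xa - Xa*X \<le> X powr \<gamma>" by linarith
    then have "(a*Bg) * (Xa - Xa*X) \<le> (a*Bg) * X powr \<gamma>"
      using pos \<open>0 < a\<close> by (intro mult_left_mono) auto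
    then show ?thesis by (simp add: algebra_simps)
  qed
  also have "\<dots> = a * (X*b/c) powr \<gamma> + b * (X*b/c) powr \<alpha> - c * (X*b/c) powr (\<alpha> + 1)"
  proof -
    have "(X*b/c) powr r = X powr r * (b/c) powr r" for r
      using powr_mult[of X "b/c" r] assms(2,3,5) by simp
    moreover have "c * (X*b/c) powr (\<alpha> + 1) = X * b * (X*b/c) powr \<alpha>"
      using assms(2,3,5) by (simp add: powr_add)
    ultimately show ?thesis by (simp add: Xa_Bg_Ba_def algebra_simps)
  qed
  finally show ?thesis by simp
qed

lemma quartic_powr_pos_point:
  fixes a b c d p q X :: real
  assumes "0 < a" "0 < b" "0 < c" "0 < d" "4 < p" "q < 2"
    and X_def: "X = 8 * (4 - q) / (p * (p - 2) * (p - q))"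
    and cond: "(X powr ((4 - q) / (p - 4)) - X powr ((p - q) / (p - 4))) *
               (a / d * (b / c) powr ((2 - q) / (p - 4))
                + 1 / d * (b powr ((p - q) / (p - 4)) / c powr ((4 - q) / (p - 4)))) > 1"
  shows "\<exists>s\<ge>0. 0 < a*s^2 + b*s^4 - c*s powr p - d*s powr q"
proof -
  define u where "u = X*b/c"
  define s where "s = u powr (1 / (p-4))"
  have X: "0 < X" "X < 1" using scaling_constant_bounds[of p q] assms by (simp_all add: X_def)
  have exponents: "(p - q) / (p - 4) = (4 - q) / (p - 4) + 1" "(2 - q) / (p - 4) \<le> (4 - q) / (p - 4)"
    using assms by (simp_all add: field_simps divide_right_mono)
  have u: "0 < u" using assms X by (simp add: u_def)
  then have s: "0 < s" "\<And>r. s powr r = u powr (r / (p-4))" by (simp_all add: s_def powr_powr)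
  have "0 < a * u powr ((2-q)/(p-4)) + b * u powr ((4-q)/(p-4)) - c * u powr ((p-q)/(p-4)) - d"
    using pos_at_scaled_point[OF assms(1-4) X exponents(2) cond[unfolded exponents(1)]]
    unfolding exponents(1) u_def .
  then show ?thesis using quartic_powr_factor[of s a b c p d q] u s by (intro exI[of _ s]) simp
qed

theorem lemma4p3:
  fixes a b c d p q X :: real and f :: "real \<Rightarrow> real"
  assumes "a > 0" "b > 0" "c > 0" "d > 0"
    and "p > 4" "q > 0" "q < 2"
    and f_def: "\<And>t. t \<ge> 0 \<Longrightarrow> f t = a * t^2 + b * t^4 - c * t powr p - d * t powr q"
    and X_def: "X = 8 * (4 - q) / (p * (p - 2) * (p - q))"
    and cond: "(X powr ((4 - q) / (p - 4)) - X powr ((p - q) / (p - 4))) *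
               (a / d * (b / c) powr ((2 - q) / (p - 4))
                + 1 / d * (b powr ((p - q) / (p - 4)) / c powr ((4 - q) / (p - 4)))) > 1"
  shows "(\<exists>t1. strict_local_min_on f {0..} t1 \<and> f t1 < 0) \<and>
         (\<exists>t2. strict_global_max_on f {0..} t2 \<and> f t2 > 0)"
proof -
  define F where "F t = a*t^2 + b*t^4 - c*t powr p - d*t powr q" for t
  define H where "H t = 2*a*t powr (2-q) + 4*b*t powr (4-q) - c*p*t powr (p-q) - d*q" for t
  define K where "K t = 2*a*(2-q) + 4*b*(4-q)*t^2 - c*p*(p-q)*t powr (p-2)" for t
  have H_quasiconcave: "min (H x) (H z) < H y" if "0 < x" "x < y" "y < z" for x y z
  proof (rule DERIV_sign_change_once_imp_quasiconcave[of H "\<lambda>t. t powr (1-q)" K])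
    show "(H has_real_derivative t powr (1-q) * K t) (at t)" if "0 < t" for t
      unfolding H_def K_def using that by (rule DERIV_quartic_powr_slope)
    show "K y < 0" if "0 < x" "x < y" "K x \<le> 0" for x y
      using that assms unfolding K_def by (intro quadratic_minus_powr_neg_beyond) auto
  qed (use that in auto)
  have "neg_pos_neg_profile F (\<lambda>t. t powr (q-1)) H"
  proof
    show "continuous_on {0..} F" unfolding F_def using assms by (intro continuous_on_quartic_powr) auto
    show "(F has_real_derivative t powr (q-1) * H t) (at t)" if "0 < t" for t
      unfolding F_def H_def using that by (rule DERIV_quartic_powr)
    show "\<exists>s. 0 < s \<and> s < r \<and> F s < 0" if "0 < r" for r
      unfolding F_def using that assms by (intro quartic_powr_neg_near_0) auto
    show "\<exists>s\<ge>0. 0 < F s"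
      unfolding F_def using assms by (intro quartic_powr_pos_point[OF _ _ _ _ _ _ X_def cond]) auto
    show "\<exists>T. \<forall>t\<ge>T. F t < 0" unfolding F_def using assms by (intro quartic_powr_neg_at_top) auto
  qed (use H_quasiconcave in \<open>force simp: F_def\<close>)+
  then obtain t1 t2 where "strict_local_min_on F {0..} t1" "F t1 < 0"
    and "strict_global_max_on F {0..} t2" "0 < F t2"
    using neg_pos_neg_profile.strict_local_min_and_strict_global_max by blast
  moreover have "\<And>t. t \<in> {0..} \<Longrightarrow> f t = F t" using f_def by (simp add: F_def)
  ultimately show ?thesis
    by (metis strict_local_min_on_cong strict_global_max_on_cong strict_local_min_on_def
        strict_global_max_on_def)
qed

end
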